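(* Let $\alpha_1,\dots,\alpha_4$ be constants, $H=H(t,t^-,q,q^-,p,p^-)$ smooth, and $X=\xi\partial_t+\eta\partial_q+\nu\partial_p$ (coefficients functions of $(t,q,p)$) such that $\Omega=0$, so that $D(C)=(S_+-1)P$ holds on the solutions of the local extremal equation $F_H=\xi\frac{\delta\tilde H}{\delta t}+\eta\frac{\delta\tilde H}{\delta q}+\nu\frac{\delta\tilde H}{\delta p}=0$. If in addition the condition $(S_+-1)P=0$ is imposed, then $I=C$ is a differential first integral: $D(C)=0$ on the solutions of $F_H=0$ satisfying $(S_+-1)P=0$.
   Context: Constant delay $\tau>0$; $t^\pm=t\pm\tau$, $f^\pm=f(t\pm\tau)$; scalar $q,p$. $S_\pm$ are the forward/backward shift operators on expressions; $\xi^\pm=S_\pm(\xi)$ etc.; $H^+=S_+(H)$. $D$ is the total derivative acting on variables at $t^-,t,t^+$. $\tilde H=p^{-}(\alpha_{1}\dot{q}+\alpha_{2}\dot{q}^{-})+p(\alpha_{3}\dot{q}+\alpha_{4}\dot{q}^{-})-H$; $\frac{\delta\tilde H}{\delta p}=\alpha_1\dot q^++(\alpha_2+\alpha_3)\dot q+\alpha_4\dot q^--\partial_p(H+H^+)$, $\frac{\delta\tilde H}{\delta q}=-\big(\alpha_4\dot p^++(\alpha_2+\alpha_3)\dot p+\alpha_1\dot p^-+\partial_q(H+H^+)\big)$, $\frac{\delta\tilde H}{\delta t}=D[\alpha_2(p\dot q-p^-\dot q^-)+\alpha_4(p^+\dot q-p\dot q^-)]+D(H)-\partial_t(H+H^+)$.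 $\Omega=\nu^{-}(\alpha_{1}\dot{q}+\alpha_{2}\dot{q}^{-})+p^{-}(\alpha_{1}D(\eta)+\alpha_{2}D(\eta^{-}))+\nu(\alpha_{3}\dot{q}+\alpha_{4}\dot{q}^{-})+p(\alpha_{3}D(\eta)+\alpha_{4}D(\eta^{-}))+(\alpha_{2}p^{-}+\alpha_{4}p)\dot{q}^{-}D(\xi-\xi^{-})-\xi H_t-\eta H_q-\nu H_p-\xi^{-}H_{t^-}-\eta^{-}H_{q^-}-\nu^{-}H_{p^-}-HD(\xi)$. $C=\eta(\alpha_{4}p^{+}+(\alpha_{2}+\alpha_{3})p+\alpha_{1}p^{-})-\xi\big(\alpha_{2}(p\dot{q}-p^{-}\dot{q}^{-})+\alpha_{4}(p^{+}\dot{q}-p\dot{q}^{-})+H\big)$, $P=(\alpha_{2}p^{-}+\alpha_{4}p)D(\eta^{-})+\nu^{-}(\alpha_{1}\dot{q}+\alpha_{2}\dot{q}^{-})-(\alpha_{2}p^{-}+\alpha_{4}p)\dot{q}^{-}D(\xi^{-})-\xi^{-}H_{t^-}-\eta^{-}H_{q^-}-\nu^{-}H_{p^-}$. Equations are considered with $t^+-t=t-t^-=\tau$. *)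

theory Defs
  imports "HOL-Analysis.Analysis"
begin

text \<open>Points: (t,q,p) for the coefficients of X; (t,t^-,q,q^-,p,p^-) for H.
  Partial derivatives are components of the Frechet derivative.\<close>

type_synonym pt3 = "real \<times> real \<times> real"
type_synonym pt6 = "real \<times> real \<times> real \<times> real \<times> real \<times> real"

definition pd_t :: "(pt3 \<Rightarrow> real) \<Rightarrow> pt3 \<Rightarrow> real" where
  "pd_t f x = frechet_derivative f (at x) (1, 0, 0)"
definition pd_q :: "(pt3 \<Rightarrow> real) \<Rightarrow> pt3 \<Rightarrow> real" where
  "pd_q f x = frechet_derivative f (at x) (0, 1, 0)"
definition pd_p :: "(pt3 \<Rightarrow> real) \<Rightarrow> pt3 \<Rightarrow> real" where
  "pd_p f x = frechet_derivative f (at x) (0, 0, 1)"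

definition Dtot :: "(pt3 \<Rightarrow> real) \<Rightarrow> pt3 \<Rightarrow> real \<Rightarrow> real \<Rightarrow> real" where
  "Dtot f x qd pd = pd_t f x + pd_q f x * qd + pd_p f x * pd"

definition H_t :: "(pt6 \<Rightarrow> real) \<Rightarrow> pt6 \<Rightarrow> real" where
  "H_t H y = frechet_derivative H (at y) (1, 0, 0, 0, 0, 0)"
definition H_tm :: "(pt6 \<Rightarrow> real) \<Rightarrow> pt6 \<Rightarrow> real" where
  "H_tm H y = frechet_derivative H (at y) (0, 1, 0, 0, 0, 0)"
definition H_q :: "(pt6 \<Rightarrow> real) \<Rightarrow> pt6 \<Rightarrow> real" where
  "H_q H y = frechet_derivative H (at y) (0, 0, 1, 0, 0, 0)"
definition H_qm :: "(pt6 \<Rightarrow> real) \<Rightarrow> pt6 \<Rightarrow> real" where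
  "H_qm H y = frechet_derivative H (at y) (0, 0, 0, 1, 0, 0)"
definition H_p :: "(pt6 \<Rightarrow> real) \<Rightarrow> pt6 \<Rightarrow> real" where
  "H_p H y = frechet_derivative H (at y) (0, 0, 0, 0, 1, 0)"
definition H_pm :: "(pt6 \<Rightarrow> real) \<Rightarrow> pt6 \<Rightarrow> real" where
  "H_pm H y = frechet_derivative H (at y) (0, 0, 0, 0, 0, 1)"

text \<open>The expression Omega, as a function of the jet variables
  t, q, q^-, p, p^-, qdot, qdot^-, pdot, pdot^- (with t^- = t - tau).\<close>
definition Omega ::
  "real \<Rightarrow> real \<Rightarrow> real \<Rightarrow> real \<Rightarrow> real \<Rightarrow> (pt6 \<Rightarrow> real) \<Rightarrow>
   (pt3 \<Rightarrow> real) \<Rightarrow> (pt3 \<Rightarrow> real) \<Rightarrow> (pt3 \<Rightarrow> real) \<Rightarrow>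
   real \<Rightarrow> real \<Rightarrow> real \<Rightarrow> real \<Rightarrow> real \<Rightarrow> real \<Rightarrow> real \<Rightarrow> real \<Rightarrow> real \<Rightarrow> real" where
  "Omega a1 a2 a3 a4 \<tau> H xi eta nu t q qm p pm qd qdm pd pdm =
    (let X = (t, q, p); Xm = (t - \<tau>, qm, pm); Y = (t, t - \<tau>, q, qm, p, pm)
     in nu Xm * (a1 * qd + a2 * qdm)
        + pm * (a1 * Dtot eta X qd pd + a2 * Dtot eta Xm qdm pdm)
        + nu X * (a3 * qd + a4 * qdm)
        + p * (a3 * Dtot eta X qd pd + a4 * Dtot eta Xm qdm pdm)
        + (a2 * pm + a4 * p) * qdm * (Dtot xi X qd pd - Dtot xi Xm qdm pdm)
        - xi X * H_t H Y - eta X * H_q H Y - nu X * H_p H Y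
        - xi Xm * H_tm H Y - eta Xm * H_qm H Y - nu Xm * H_pm H Y
        - H Y * Dtot xi X qd pd)"

text \<open>Quantities along a trajectory (q(t), p(t)); D is the derivative along it.\<close>
definition Ytr :: "real \<Rightarrow> (real \<Rightarrow> real) \<Rightarrow> (real \<Rightarrow> real) \<Rightarrow> real \<Rightarrow> pt6" where
  "Ytr \<tau> q p t = (t, t - \<tau>, q t, q (t - \<tau>), p t, p (t - \<tau>))"

definition Xtr :: "(real \<Rightarrow> real) \<Rightarrow> (real \<Rightarrow> real) \<Rightarrow> real \<Rightarrow> pt3" where
  "Xtr q p t = (t, q t, p t)"

definition varH_p where
  "varH_p a1 a2 a3 a4 \<tau> H q p t =
     a1 * deriv q (t + \<tau>) + (a2 + a3) * deriv q t + a4 * deriv q (t - \<tau>)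
     - (H_p H (Ytr \<tau> q p t) + H_pm H (Ytr \<tau> q p (t + \<tau>)))"

definition varH_q where
  "varH_q a1 a2 a3 a4 \<tau> H q p t =
     - (a4 * deriv p (t + \<tau>) + (a2 + a3) * deriv p t + a1 * deriv p (t - \<tau>)
        + H_q H (Ytr \<tau> q p t) + H_qm H (Ytr \<tau> q p (t + \<tau>)))"

definition varH_t where
  "varH_t a1 a2 a3 a4 \<tau> H q p t =
     deriv (\<lambda>s. a2 * (p s * deriv q s - p (s - \<tau>) * deriv q (s - \<tau>))
              + a4 * (p (s + \<tau>) * deriv q s - p s * deriv q (s - \<tau>))) t
     + deriv (\<lambda>s. H (Ytr \<tau> q p s)) t
     - (H_t H (Ytr \<tau> q p t) + H_tm H (Ytr \<tau> q p (t + \<tau>)))"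

definition F_H where
  "F_H a1 a2 a3 a4 \<tau> H xi eta nu q p t =
     xi (Xtr q p t) * varH_t a1 a2 a3 a4 \<tau> H q p t
     + eta (Xtr q p t) * varH_q a1 a2 a3 a4 \<tau> H q p t
     + nu (Xtr q p t) * varH_p a1 a2 a3 a4 \<tau> H q p t"

definition Cq where
  "Cq a1 a2 a3 a4 \<tau> H xi eta q p t =
     eta (Xtr q p t) * (a4 * p (t + \<tau>) + (a2 + a3) * p t + a1 * p (t - \<tau>))
     - xi (Xtr q p t) * (a2 * (p t * deriv q t - p (t - \<tau>) * deriv q (t - \<tau>))
                        + a4 * (p (t + \<tau>) * deriv q t - p t * deriv q (t - \<tau>))
                        + H (Ytr \<tau> q p t))"

definition Pq where
  "Pq a1 a2 a3 a4 \<tau> H xi eta nu q p t =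
     (a2 * p (t - \<tau>) + a4 * p t) * deriv (\<lambda>s. eta (Xtr q p s)) (t - \<tau>)
     + nu (Xtr q p (t - \<tau>)) * (a1 * deriv q t + a2 * deriv q (t - \<tau>))
     - (a2 * p (t - \<tau>) + a4 * p t) * deriv q (t - \<tau>) * deriv (\<lambda>s. xi (Xtr q p s)) (t - \<tau>)
     - xi (Xtr q p (t - \<tau>)) * H_tm H (Ytr \<tau> q p t)
     - eta (Xtr q p (t - \<tau>)) * H_qm H (Ytr \<tau> q p t)
     - nu (Xtr q p (t - \<tau>)) * H_pm H (Ytr \<tau> q p t)"

end

theory Submission
  imports Defs
begin

(* Along every smooth trajectory (q, p), write C = eta * momentum - xi * energy.  Differentiating
   this product and substituting the definitions of Omega, P and F_H yields the identity
     D(C) = Omega + (S_+ - 1) P - F_H,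
   in which the derivatives of momentum and energy are never expanded: they cancel against the
   same terms inside dH~/dq and dH~/dt.  The three hypotheses Omega = 0, (S_+ - 1) P = 0 and
   F_H = 0 then make D(C) vanish. *)

lemma linear_triple_expand:
  fixes L :: "real \<times> real \<times> real \<Rightarrow> 'b::real_vector"
  assumes "linear L"
  shows "L (a, b, c) = a *\<^sub>R L (1, 0, 0) + b *\<^sub>R L (0, 1, 0) + c *\<^sub>R L (0, 0, 1)"
proof -
  have "(a, b, c) = a *\<^sub>R (1, 0, 0) + b *\<^sub>R (0, 1, 0) + c *\<^sub>R (0::real, 0::real, 1::real)"
    by simp
  then show ?thesis
    by (simp only: linear_add[OF assms] linear_scale[OF assms])
qed

lemma DERIV_comp_Xtr:
  assumes f: "f differentiable (at (Xtr q p s))"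
    and q: "(q has_real_derivative dq) (at s)" and p: "(p has_real_derivative dp) (at s)"
  shows "((\<lambda>s. f (Xtr q p s)) has_real_derivative Dtot f (Xtr q p s) dq dp) (at s)"
proof -
  let ?L = "frechet_derivative f (at (Xtr q p s))"
  have f': "(f has_derivative ?L) (at (Xtr q p s))"
    using f frechet_derivative_works by blast
  have "(Xtr q p has_derivative (\<lambda>h. (h, dq * h, dp * h))) (at s)"
    unfolding Xtr_def using q p
    by (auto intro!: derivative_eq_intros has_field_derivative_imp_has_derivative)
  from diff_chain_at[OF this f']
  have "((\<lambda>s. f (Xtr q p s)) has_derivative (\<lambda>h. ?L (h, dq * h, dp * h))) (at s)"
    by (simp add: o_def)
  then show ?thesis
    unfolding has_field_derivative_def Dtot_def pd_t_def pd_q_def pd_p_def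
    by (rule has_derivative_eq_rhs)
      (rule ext, subst linear_triple_expand[OF has_derivative_linear[OF f']], simp add: algebra_simps)
qed

lemma deriv_comp_Xtr:
  assumes "f differentiable (at (Xtr q p s))"
    and "q differentiable (at s)" and "p differentiable (at s)"
  shows "deriv (\<lambda>s. f (Xtr q p s)) s = Dtot f (Xtr q p s) (deriv q s) (deriv p s)"
  using assms
  by (intro DERIV_imp_deriv DERIV_comp_Xtr) (simp_all add: DERIV_deriv_iff_real_differentiable)

lemma differentiable_shift:
  fixes f :: "real \<Rightarrow> 'a::real_normed_vector"
  assumes "\<And>s. f differentiable (at s)"
  shows "(\<lambda>s. f (s + c)) differentiable (at t)" and "(\<lambda>s. f (s - c)) differentiable (at t)"
  by (rule differentiable_compose[OF assms], intro derivative_intros)+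

lemma DERIV_deriv_shift:
  fixes f :: "real \<Rightarrow> real"
  assumes "\<And>s. f differentiable (at s)"
  shows "((\<lambda>s. f (s + c)) has_real_derivative deriv f (t + c)) (at t)"
    and "((\<lambda>s. f (s - c)) has_real_derivative deriv f (t - c)) (at t)"
proof -
  have "(f has_real_derivative deriv f s) (at s)" for s
    using assms DERIV_deriv_iff_real_differentiable by blast
  then show "((\<lambda>s. f (s + c)) has_real_derivative deriv f (t + c)) (at t)"
    and "((\<lambda>s. f (s - c)) has_real_derivative deriv f (t - c)) (at t)"
    using DERIV_shift[of f "deriv f (t + c)" t c] DERIV_shift[of f "deriv f (t - c)" t "- c"]
    by auto
qed

lemma Ytr_differentiable:
  assumes "\<And>s. q differentiable (at s)" and "\<And>s. p differentiable (at s)"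
  shows "Ytr \<tau> q p differentiable (at t)"
  unfolding Ytr_def
  by (intro differentiable_Pair differentiable_ident differentiable_diff differentiable_const
      assms differentiable_shift[OF assms(1)] differentiable_shift[OF assms(2)])

definition momentum :: "real \<Rightarrow> real \<Rightarrow> real \<Rightarrow> real \<Rightarrow> real \<Rightarrow> (real \<Rightarrow> real) \<Rightarrow> real \<Rightarrow> real"
  where "momentum a1 a2 a3 a4 \<tau> p t = a4 * p (t + \<tau>) + (a2 + a3) * p t + a1 * p (t - \<tau>)"

definition delay_energy :: "real \<Rightarrow> real \<Rightarrow> real \<Rightarrow> (real \<Rightarrow> real) \<Rightarrow> (real \<Rightarrow> real) \<Rightarrow> real \<Rightarrow> real"
  where "delay_energy a2 a4 \<tau> q p t =
    a2 * (p t * deriv q t - p (t - \<tau>) * deriv q (t - \<tau>))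
    + a4 * (p (t + \<tau>) * deriv q t - p t * deriv q (t - \<tau>))"

definition energy ::
  "real \<Rightarrow> real \<Rightarrow> real \<Rightarrow> (pt6 \<Rightarrow> real) \<Rightarrow> (real \<Rightarrow> real) \<Rightarrow> (real \<Rightarrow> real) \<Rightarrow> real \<Rightarrow> real"
  where "energy a2 a4 \<tau> H q p t = delay_energy a2 a4 \<tau> q p t + H (Ytr \<tau> q p t)"

lemma Cq_eq_momentum_energy:
  "Cq a1 a2 a3 a4 \<tau> H xi eta q p =
    (\<lambda>t. eta (Xtr q p t) * momentum a1 a2 a3 a4 \<tau> p t - xi (Xtr q p t) * energy a2 a4 \<tau> H q p t)"
  by (simp add: fun_eq_iff Cq_def momentum_def energy_def delay_energy_def)

lemma DERIV_momentum:
  assumes "\<And>s. p differentiable (at s)"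
  shows "(momentum a1 a2 a3 a4 \<tau> p has_real_derivative
      a4 * deriv p (t + \<tau>) + (a2 + a3) * deriv p t + a1 * deriv p (t - \<tau>)) (at t)"
  unfolding momentum_def[abs_def]
  using assms DERIV_deriv_shift[OF assms, of \<tau> t]
  by (intro DERIV_add DERIV_cmult) (simp_all add: DERIV_deriv_iff_real_differentiable)

lemma delay_energy_differentiable:
  assumes "\<And>s. deriv q differentiable (at s)" and "\<And>s. p differentiable (at s)"
  shows "delay_energy a2 a4 \<tau> q p differentiable (at t)"
  unfolding delay_energy_def[abs_def]
  by (intro differentiable_add differentiable_diff differentiable_mult differentiable_const
      assms differentiable_shift[OF assms(1)] differentiable_shift[OF assms(2)])

lemma DERIV_energy:
  assumes H: "\<And>y. H differentiable (at y)"
    and q: "\<And>s. q differentiable (at s)" and q': "\<And>s. deriv q differentiable (at s)"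
    and p: "\<And>s. p differentiable (at s)"
  shows "(energy a2 a4 \<tau> H q p has_real_derivative
      deriv (delay_energy a2 a4 \<tau> q p) t + deriv (\<lambda>s. H (Ytr \<tau> q p s)) t) (at t)"
proof -
  have "(\<lambda>s. H (Ytr \<tau> q p s)) differentiable (at t)"
    by (rule differentiable_compose[OF H Ytr_differentiable[OF q p]])
  with delay_energy_differentiable[OF q' p] show ?thesis
    unfolding energy_def[abs_def]
    by (intro DERIV_add) (simp_all add: DERIV_deriv_iff_real_differentiable)
qed

lemma varH_q_eq_deriv_momentum:
  assumes "\<And>s. p differentiable (at s)"
  shows "varH_q a1 a2 a3 a4 \<tau> H q p t =
    - (deriv (momentum a1 a2 a3 a4 \<tau> p) t + H_q H (Ytr \<tau> q p t) + H_qm H (Ytr \<tau> q p (t + \<tau>)))"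
  unfolding varH_q_def DERIV_imp_deriv[OF DERIV_momentum[OF assms]] by simp

lemma varH_t_eq_deriv_energy:
  assumes "\<And>y. H differentiable (at y)"
    and "\<And>s. q differentiable (at s)" and "\<And>s. deriv q differentiable (at s)"
    and "\<And>s. p differentiable (at s)"
  shows "varH_t a1 a2 a3 a4 \<tau> H q p t =
    deriv (energy a2 a4 \<tau> H q p) t - (H_t H (Ytr \<tau> q p t) + H_tm H (Ytr \<tau> q p (t + \<tau>)))"
proof -
  have "deriv (energy a2 a4 \<tau> H q p) t
      = deriv (delay_energy a2 a4 \<tau> q p) t + deriv (\<lambda>s. H (Ytr \<tau> q p s)) t"
    by (rule DERIV_imp_deriv[OF DERIV_energy[OF assms]])
  then show ?thesis
    unfolding varH_t_def delay_energy_def[abs_def] by linarith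
qed

lemma deriv_Cq:
  assumes H: "\<And>y. H differentiable (at y)"
    and xi: "\<And>x. xi differentiable (at x)" and eta: "\<And>x. eta differentiable (at x)"
    and q: "\<And>s. q differentiable (at s)" and q': "\<And>s. deriv q differentiable (at s)"
    and p: "\<And>s. p differentiable (at s)"
  shows "deriv (Cq a1 a2 a3 a4 \<tau> H xi eta q p) t =
      eta (Xtr q p t) * deriv (momentum a1 a2 a3 a4 \<tau> p) t
      + Dtot eta (Xtr q p t) (deriv q t) (deriv p t) * momentum a1 a2 a3 a4 \<tau> p t
      - (xi (Xtr q p t) * deriv (energy a2 a4 \<tau> H q p) t
         + Dtot xi (Xtr q p t) (deriv q t) (deriv p t) * energy a2 a4 \<tau> H q p t)"
proof -
  have Dq: "(q has_real_derivative deriv q t) (at t)"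
    and Dp: "(p has_real_derivative deriv p t) (at t)"
    using q p by (simp_all add: DERIV_deriv_iff_real_differentiable)
  have "momentum a1 a2 a3 a4 \<tau> p differentiable (at t)"
    "energy a2 a4 \<tau> H q p differentiable (at t)"
    using DERIV_momentum[OF p] DERIV_energy[OF H q q' p] real_differentiable_def by blast+
  then have "(momentum a1 a2 a3 a4 \<tau> p has_real_derivative deriv (momentum a1 a2 a3 a4 \<tau> p) t) (at t)"
    and "(energy a2 a4 \<tau> H q p has_real_derivative deriv (energy a2 a4 \<tau> H q p) t) (at t)"
    by (simp_all add: DERIV_deriv_iff_real_differentiable)
  with DERIV_comp_Xtr[OF eta Dq Dp] DERIV_comp_Xtr[OF xi Dq Dp] show ?thesis
    unfolding Cq_eq_momentum_energy by (intro DERIV_imp_deriv DERIV_diff DERIV_mult')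
qed

lemma deriv_Cq_eq_Omega_Pq_F_H:
  assumes H: "\<And>y. H differentiable (at y)"
    and xi: "\<And>x. xi differentiable (at x)" and eta: "\<And>x. eta differentiable (at x)"
    and q: "\<And>s. q differentiable (at s)" and q': "\<And>s. deriv q differentiable (at s)"
    and p: "\<And>s. p differentiable (at s)"
  shows "deriv (Cq a1 a2 a3 a4 \<tau> H xi eta q p) t =
      Omega a1 a2 a3 a4 \<tau> H xi eta nu t (q t) (q (t - \<tau>)) (p t) (p (t - \<tau>))
        (deriv q t) (deriv q (t - \<tau>)) (deriv p t) (deriv p (t - \<tau>))
      + (Pq a1 a2 a3 a4 \<tau> H xi eta nu q p (t + \<tau>) - Pq a1 a2 a3 a4 \<tau> H xi eta nu q p t)
      - F_H a1 a2 a3 a4 \<tau> H xi eta nu q p t"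
  unfolding deriv_Cq[OF assms] F_H_def varH_t_eq_deriv_energy[OF H q q' p]
    varH_q_eq_deriv_momentum[OF p] varH_p_def Omega_def Pq_def
    deriv_comp_Xtr[OF eta q p] deriv_comp_Xtr[OF xi q p]
  by (simp add: momentum_def energy_def delay_energy_def Xtr_def Ytr_def Let_def algebra_simps)

theorem proposition3:
  fixes a1 a2 a3 a4 \<tau> :: real
    and H :: "pt6 \<Rightarrow> real"
    and xi eta nu :: "pt3 \<Rightarrow> real"
    and q p :: "real \<Rightarrow> real"
  assumes tau_pos: "\<tau> > 0"
    and H_smooth: "\<forall>y. H differentiable (at y)"
    and xi_smooth: "\<forall>x. xi differentiable (at x)"
    and eta_smooth: "\<forall>x. eta differentiable (at x)"
    and nu_smooth: "\<forall>x. nu differentiable (at x)"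
    and q_smooth: "\<forall>n s. ((deriv ^^ n) q) differentiable (at s)"
    and p_smooth: "\<forall>n s. ((deriv ^^ n) p) differentiable (at s)"
    and Omega_zero: "\<forall>t q0 qm p0 pm qd qdm pd pdm.
                       Omega a1 a2 a3 a4 \<tau> H xi eta nu t q0 qm p0 pm qd qdm pd pdm = 0"
    and solution: "\<forall>t. F_H a1 a2 a3 a4 \<tau> H xi eta nu q p t = 0"
    and P_cond: "\<forall>t. Pq a1 a2 a3 a4 \<tau> H xi eta nu q p (t + \<tau>)
                      - Pq a1 a2 a3 a4 \<tau> H xi eta nu q p t = 0"
  shows "\<forall>t. deriv (Cq a1 a2 a3 a4 \<tau> H xi eta q p) t = 0"
proof
  fix t
  have q: "\<And>s. q differentiable (at s)" and q': "\<And>s. deriv q differentiable (at s)"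
    and p: "\<And>s. p differentiable (at s)"
    using q_smooth[rule_format, of 0] q_smooth[rule_format, of 1] p_smooth[rule_format, of 0]
    by simp_all
  show "deriv (Cq a1 a2 a3 a4 \<tau> H xi eta q p) t = 0"
    unfolding deriv_Cq_eq_Omega_Pq_F_H[OF H_smooth[rule_format] xi_smooth[rule_format]
        eta_smooth[rule_format] q q' p, where nu = nu]
    using Omega_zero solution P_cond by simp
qed

end
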